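(* Let $(Q,Z)$ be a locally gentle pair and let $v,w\in Q_0$ be distinct relational vertices. Let $x=v^{w}\in Q^{w}_0$ and $y=w^{v}\in Q^{v}_0$. Then there is a quiver isomorphism $(Q^{w})^{x}\to (Q^{v})^{y}$ which maps $(Z^{w})^{x}$ onto $(Z^{v})^{y}$.
   Context: A quiver $Q$ has vertex set $Q_0$, arrow set $Q_1$, head and tail maps $h,t$. $Z$ is a set of paths of length $2$; a path is admissible if no element of $Z$ is a subpath. $(Q,Z)$ is locally gentle if every vertex is head of at most two and tail of at most two arrows, and for each arrow $b$ there is at most one admissible and at most one inadmissible length-2 path of the form $cb$, and likewise of the form $ba$. A vertex $v$ is relational if some $ba\in Z$ has $t(b)=v=h(a)$. For such $v$ let $b,a$ be as stated, $c$ the other arrow with head $v$ (if any), $d$ the other arrow with tail $v$ (if any). The levee $(Q^v,Z^v)$ at $v$: vertices $u^v$ ($u\neq v$) plus two new distinct vertices $v(\sharp),v(\flat)$; arrows $e^v$ ($e\in Q_1$) with heads/tails $h(e)^v$, $t(e)^v$ when these are not $v$, and otherwise $t^v(b^v)=v(\sharp)=h^v(c^v)$, $t^v(d^v)=v(\flat)=h^v(a^v)$ (whenever the arrows exist); $Z^v=\{m^vn^v: mn\in Z,\ t(m)\neq v\}$. The levee of a locally gentle pair is locally gentle, and in the situation of the claim $x$ is relational in $(Q^w,Z^w)$ and $y$ is relational in $(Q^v,Z^v)$, so the iterated levees are defined. *)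

theory Defs
  imports Main
begin

record ('v, 'a) quiver =
  verts :: "'v set"
  arrs  :: "'a set"
  hd_q  :: "'a \<Rightarrow> 'v"
  tl_q  :: "'a \<Rightarrow> 'v"

definition wf_quiver :: "('v, 'a) quiver \<Rightarrow> bool" where
  "wf_quiver Q \<longleftrightarrow> (\<forall>e\<in>arrs Q. hd_q Q e \<in> verts Q \<and> tl_q Q e \<in> verts Q)"

text \<open>Paths of length 2: the pair (b, a) stands for the path ba (first a, then b),
  so t(b) = h(a).\<close>
definition paths2 :: "('v, 'a) quiver \<Rightarrow> ('a \<times> 'a) set" where
  "paths2 Q = {(b, a). b \<in> arrs Q \<and> a \<in> arrs Q \<and> tl_q Q b = hd_q Q a}"

definition at_most_one :: "('a \<Rightarrow> bool) \<Rightarrow> bool" where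
  "at_most_one P \<longleftrightarrow> (\<forall>x y. P x \<longrightarrow> P y \<longrightarrow> x = y)"

definition locally_gentle :: "('v, 'a) quiver \<Rightarrow> ('a \<times> 'a) set \<Rightarrow> bool" where
  "locally_gentle Q Z \<longleftrightarrow>
     wf_quiver Q \<and> Z \<subseteq> paths2 Q \<and>
     (\<forall>v\<in>verts Q. finite {e\<in>arrs Q. hd_q Q e = v} \<and> card {e\<in>arrs Q. hd_q Q e = v} \<le> 2) \<and>
     (\<forall>v\<in>verts Q. finite {e\<in>arrs Q. tl_q Q e = v} \<and> card {e\<in>arrs Q. tl_q Q e = v} \<le> 2) \<and>
     (\<forall>b\<in>arrs Q.
        at_most_one (\<lambda>c. (c, b) \<in> paths2 Q \<and> (c, b) \<notin> Z) \<and>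
        at_most_one (\<lambda>c. (c, b) \<in> Z) \<and>
        at_most_one (\<lambda>a. (b, a) \<in> paths2 Q \<and> (b, a) \<notin> Z) \<and>
        at_most_one (\<lambda>a. (b, a) \<in> Z))"

definition relational :: "('v, 'a) quiver \<Rightarrow> ('a \<times> 'a) set \<Rightarrow> 'v \<Rightarrow> bool" where
  "relational Q Z v \<longleftrightarrow> v \<in> verts Q \<and> (\<exists>(b, a)\<in>Z. tl_q Q b = v \<and> hd_q Q a = v)"

text \<open>Vertices of a levee: old vertices u^v, and the two new vertices v(sharp), v(flat).\<close>
datatype 'v lv = Old 'v | Sharp | Flat

definition rel_choice :: "('v, 'a) quiver \<Rightarrow> ('a \<times> 'a) set \<Rightarrow> 'v \<Rightarrow> 'a \<times> 'a" where
  "rel_choice Q Z v = (SOME (b, a). (b, a) \<in> Z \<and> tl_q Q b = v \<and> hd_q Q a = v)"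

text \<open>Arrows e^v are represented by e itself. The arrows with head v are a and
  (possibly) c; those with tail v are b and (possibly) d.\<close>
definition levee_q :: "('v, 'a) quiver \<Rightarrow> ('a \<times> 'a) set \<Rightarrow> 'v \<Rightarrow> ('v lv, 'a) quiver" where
  "levee_q Q Z v =
     (let (b, a) = rel_choice Q Z v in
      \<lparr> verts = Old ` (verts Q - {v}) \<union> {Sharp, Flat},
        arrs = arrs Q,
        hd_q = (\<lambda>e. if hd_q Q e \<noteq> v then Old (hd_q Q e) else if e = a then Flat else Sharp),
        tl_q = (\<lambda>e. if tl_q Q e \<noteq> v then Old (tl_q Q e) else if e = b then Sharp else Flat) \<rparr>)"

definition levee_z :: "('v, 'a) quiver \<Rightarrow> ('a \<times> 'a) set \<Rightarrow> 'v \<Rightarrow> ('a \<times> 'a) set" where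
  "levee_z Q Z v = {(m, n) \<in> Z. tl_q Q m \<noteq> v}"

definition quiver_iso :: "('v, 'a) quiver \<Rightarrow> ('w, 'b) quiver \<Rightarrow> ('v \<Rightarrow> 'w) \<Rightarrow> ('a \<Rightarrow> 'b) \<Rightarrow> bool" where
  "quiver_iso Q Q' \<phi> \<psi> \<longleftrightarrow>
     bij_betw \<phi> (verts Q) (verts Q') \<and> bij_betw \<psi> (arrs Q) (arrs Q') \<and>
     (\<forall>e\<in>arrs Q. hd_q Q' (\<psi> e) = \<phi> (hd_q Q e) \<and> tl_q Q' (\<psi> e) = \<phi> (tl_q Q e))"

end

theory Submission
  imports Defs
begin

text \<open>Levees at distinct vertices v and w modify disjoint sets of arrow ends, and leveeing at w
  changes neither the relations through v nor the relation chosen at v. Hence both iterated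
  levees have the same arrows and the same relations, and their vertices differ only in the
  level at which the new vertices v(sharp), v(flat), w(sharp), w(flat) are created; exchanging
  these levels is the isomorphism. This argument uses only v \<noteq> w: the choice at a
  non-relational vertex is an arbitrary but common value on both sides.\<close>

abbreviation levee2_q :: "('v, 'a) quiver \<Rightarrow> ('a \<times> 'a) set \<Rightarrow> 'v \<Rightarrow> 'v \<Rightarrow> ('v lv lv, 'a) quiver" where
  "levee2_q Q Z w v \<equiv> levee_q (levee_q Q Z w) (levee_z Q Z w) (Old v)"

abbreviation levee2_z :: "('v, 'a) quiver \<Rightarrow> ('a \<times> 'a) set \<Rightarrow> 'v \<Rightarrow> 'v \<Rightarrow> ('a \<times> 'a) set" where
  "levee2_z Q Z w v \<equiv> levee_z (levee_q Q Z w) (levee_z Q Z w) (Old v)"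

lemma verts_levee_q: "verts (levee_q Q Z v) = Old ` (verts Q - {v}) \<union> {Sharp, Flat}"
  by (simp add: levee_q_def split: prod.splits)

lemma arrs_levee_q [simp]: "arrs (levee_q Q Z v) = arrs Q"
  by (simp add: levee_q_def split: prod.splits)

lemma hd_levee_q:
  "rel_choice Q Z v = (b, a) \<Longrightarrow>
    hd_q (levee_q Q Z v) e = (if hd_q Q e \<noteq> v then Old (hd_q Q e) else if e = a then Flat else Sharp)"
  by (simp add: levee_q_def)

lemma tl_levee_q:
  "rel_choice Q Z v = (b, a) \<Longrightarrow>
    tl_q (levee_q Q Z v) e = (if tl_q Q e \<noteq> v then Old (tl_q Q e) else if e = b then Sharp else Flat)"
  by (simp add: levee_q_def)

lemma rel_choice_levee:
  assumes "v \<noteq> w"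
  shows "rel_choice (levee_q Q Z w) (levee_z Q Z w) (Old v) = rel_choice Q Z v"
proof -
  obtain b a where "rel_choice Q Z w = (b, a)" by fastforce
  then have "(\<lambda>(m, n). (m, n) \<in> levee_z Q Z w \<and> tl_q (levee_q Q Z w) m = Old v
                        \<and> hd_q (levee_q Q Z w) n = Old v)
           = (\<lambda>(m, n). (m, n) \<in> Z \<and> tl_q Q m = v \<and> hd_q Q n = v)"
    using assms by (auto simp: hd_levee_q tl_levee_q levee_z_def fun_eq_iff)
  then show ?thesis unfolding rel_choice_def by simp
qed

lemma levee2_z_eq:
  assumes "v \<noteq> w"
  shows "levee2_z Q Z w v = {(m, n) \<in> Z. tl_q Q m \<noteq> v \<and> tl_q Q m \<noteq> w}"
proof -
  obtain b a where "rel_choice Q Z w = (b, a)" by fastforce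
  then show ?thesis by (auto simp: tl_levee_q levee_z_def)
qed

definition swap_levels :: "'v lv lv \<Rightarrow> 'v lv lv" where
  "swap_levels x = (case x of
      Old (Old u) \<Rightarrow> Old (Old u) | Old Sharp \<Rightarrow> Sharp | Old Flat \<Rightarrow> Flat
    | Sharp \<Rightarrow> Old Sharp | Flat \<Rightarrow> Old Flat)"

lemma swap_levels_swap_levels [simp]: "swap_levels (swap_levels x) = x"
  by (auto simp: swap_levels_def split: lv.splits)

lemma inj_swap_levels: "inj swap_levels"
  by (metis injI swap_levels_swap_levels)

lemma mem_verts_levee2_q:
  "x \<in> verts (levee2_q Q Z w v) \<longleftrightarrow>
    x \<in> {Sharp, Flat, Old Sharp, Old Flat} \<or> (\<exists>u \<in> verts Q - {v, w}. x = Old (Old u))"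
  by (auto simp: verts_levee_q)

lemma swap_levels_verts_levee2_q:
  "swap_levels ` verts (levee2_q Q Z w v) = verts (levee2_q Q Z v w)"
proof (rule set_eqI)
  fix x
  have "x \<in> swap_levels ` verts (levee2_q Q Z w v) \<longleftrightarrow> swap_levels x \<in> verts (levee2_q Q Z w v)"
    by (force intro: image_eqI[where x = "swap_levels x"])
  then show "x \<in> swap_levels ` verts (levee2_q Q Z w v) \<longleftrightarrow> x \<in> verts (levee2_q Q Z v w)"
    unfolding mem_verts_levee2_q by (auto simp: swap_levels_def split: lv.splits)
qed

lemma ends_levee2_q_swap_levels:
  assumes "v \<noteq> w"
  shows "hd_q (levee2_q Q Z v w) e = swap_levels (hd_q (levee2_q Q Z w v) e)"
    and "tl_q (levee2_q Q Z v w) e = swap_levels (tl_q (levee2_q Q Z w v) e)"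
proof -
  obtain bv av where v: "rel_choice Q Z v = (bv, av)" by fastforce
  obtain bw aw where w: "rel_choice Q Z w = (bw, aw)" by fastforce
  note choices = rel_choice_levee[OF assms, of Q Z, unfolded v]
    rel_choice_levee[OF assms[symmetric], of Q Z, unfolded w]
  show "hd_q (levee2_q Q Z v w) e = swap_levels (hd_q (levee2_q Q Z w v) e)"
    "tl_q (levee2_q Q Z v w) e = swap_levels (tl_q (levee2_q Q Z w v) e)"
    using assms
    by (auto simp: hd_levee_q[OF choices(1)] tl_levee_q[OF choices(1)]
        hd_levee_q[OF choices(2)] tl_levee_q[OF choices(2)]
        hd_levee_q[OF v] tl_levee_q[OF v] hd_levee_q[OF w] tl_levee_q[OF w] swap_levels_def)
qed

lemma quiver_iso_levee2_q:
  assumes "v \<noteq> w"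
  shows "quiver_iso (levee2_q Q Z w v) (levee2_q Q Z v w) swap_levels id"
proof -
  have "bij_betw swap_levels (verts (levee2_q Q Z w v)) (verts (levee2_q Q Z v w))"
    using inj_swap_levels swap_levels_verts_levee2_q by (metis bij_betw_imageI inj_on_subset subset_UNIV)
  then show ?thesis
    using ends_levee2_q_swap_levels[OF assms, of Q Z] by (simp add: quiver_iso_def)
qed

theorem lemma2p11:
  fixes Q :: "('v, 'a) quiver" and Z :: "('a \<times> 'a) set" and v w :: 'v
  assumes "locally_gentle Q Z"
    and "relational Q Z v" and "relational Q Z w" and "v \<noteq> w"
  shows "\<exists>\<phi> \<psi>.
    quiver_iso (levee_q (levee_q Q Z w) (levee_z Q Z w) (Old v))
               (levee_q (levee_q Q Z v) (levee_z Q Z v) (Old w)) \<phi> \<psi> \<and>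
    (\<lambda>(m, n). (\<psi> m, \<psi> n)) ` levee_z (levee_q Q Z w) (levee_z Q Z w) (Old v)
      = levee_z (levee_q Q Z v) (levee_z Q Z v) (Old w)"
proof (intro exI conjI)
  show "quiver_iso (levee2_q Q Z w v) (levee2_q Q Z v w) swap_levels id"
    using quiver_iso_levee2_q[OF \<open>v \<noteq> w\<close>] .
  have "levee2_z Q Z w v = levee2_z Q Z v w"
    unfolding levee2_z_eq[OF \<open>v \<noteq> w\<close>] levee2_z_eq[OF \<open>v \<noteq> w\<close>[symmetric]] by auto
  then show "(\<lambda>(m, n). (id m, id n)) ` levee2_z Q Z w v = levee2_z Q Z v w"
    by simp
qed

end
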